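(* Let $P=(X,\prec)$ be a finite twin-free poset that is a unit OC interval order. Then $P$ contains none of the following six posets as an induced subposet: $\mathbf{4}+\mathbf{1}$, $\mathbf{3}+\mathbf{1}+\mathbf{1}$, $Z$, $D$, $Y$, and the dual of $Y$.
   Context: Posets $P=(X,\prec)$ are strict (irreflexive) partial orders; $x\parallel y$ means $x,y$ are incomparable. An induced subposet is a subset of $X$ with the restricted order. Two points are twins if they have exactly the same comparabilities (same set of elements below and same set of elements above); $P$ is twin-free if it has no two distinct twins. An OC interval representation of $P$ assigns to each $x\in X$ a real interval $I(x)$ that is either open or closed, such that $x\prec y$ if and only if every point of $I(x)$ is less than every point of $I(y)$. $P$ is a unit OC interval order if it has an OC interval representation in which all intervals have the same length. The posets (all pairs not listed as comparable, nor implied by transitivity, are incomparable): $\mathbf{4}+\mathbf{1}$ has elements $a,b,c,d,x$ with $a\prec b\prec c\prec d$ and $x$ incomparable to all. $\mathbf{3}+\mathbf{1}+\mathbf{1}$ has elements $a,b,c,x,y$ with $a\prec b\prec c$ and $x,y$ incomparable to everything. $Z$ has elements $a,b,c,d,x,y$ with $a\prec b\prec c\prec d$, $x\prec d$, $a\prec y$. $D$ has elements $a,b,c,d,x$ with $a\prec b\prec d$, $a\prec c\prec d$. $Y$ has elements $a,b,c,d,x$ with $a\prec d\prec b$ and $a\prec d\prec c$. The dual of a poset is obtained by reversing all comparabilities. *)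

theory Defs
  imports Complex_Main
begin

definition strict_poset :: "'a set \<Rightarrow> ('a \<Rightarrow> 'a \<Rightarrow> bool) \<Rightarrow> bool" where
  "strict_poset X lt \<longleftrightarrow>
     (\<forall>x\<in>X. \<not> lt x x) \<and>
     (\<forall>x\<in>X. \<forall>y\<in>X. \<forall>z\<in>X. lt x y \<longrightarrow> lt y z \<longrightarrow> lt x z)"

definition twins :: "'a set \<Rightarrow> ('a \<Rightarrow> 'a \<Rightarrow> bool) \<Rightarrow> 'a \<Rightarrow> 'a \<Rightarrow> bool" where
  "twins X lt x y \<longleftrightarrow> (\<forall>z\<in>X. (lt z x \<longleftrightarrow> lt z y) \<and> (lt x z \<longleftrightarrow> lt y z))"

definition twin_free :: "'a set \<Rightarrow> ('a \<Rightarrow> 'a \<Rightarrow> bool) \<Rightarrow> bool" where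
  "twin_free X lt \<longleftrightarrow> (\<forall>x\<in>X. \<forall>y\<in>X. x \<noteq> y \<longrightarrow> \<not> twins X lt x y)"

text \<open>An OC interval is encoded as (left endpoint, right endpoint, closed?).
  A closed interval [l,r] requires l \<le> r; an open interval (l,r) requires l < r
  (so that intervals are nonempty).\<close>

type_synonym ocint = "real \<times> real \<times> bool"

definition valid_ocint :: "ocint \<Rightarrow> bool" where
  "valid_ocint I = (case I of (l, r, cl) \<Rightarrow> if cl then l \<le> r else l < r)"

definition ocint_set :: "ocint \<Rightarrow> real set" where
  "ocint_set I = (case I of (l, r, cl) \<Rightarrow> if cl then {l..r} else {l<..<r})"

definition ocint_length :: "ocint \<Rightarrow> real" where
  "ocint_length I = (case I of (l, r, _) \<Rightarrow> r - l)"

definition OC_representation :: "'a set \<Rightarrow> ('a \<Rightarrow> 'a \<Rightarrow> bool) \<Rightarrow> ('a \<Rightarrow> ocint) \<Rightarrow> bool" where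
  "OC_representation X lt I \<longleftrightarrow>
     (\<forall>x\<in>X. valid_ocint (I x)) \<and>
     (\<forall>x\<in>X. \<forall>y\<in>X. lt x y \<longleftrightarrow> (\<forall>p\<in>ocint_set (I x). \<forall>q\<in>ocint_set (I y). p < q))"

definition unit_OC_interval_order :: "'a set \<Rightarrow> ('a \<Rightarrow> 'a \<Rightarrow> bool) \<Rightarrow> bool" where
  "unit_OC_interval_order X lt \<longleftrightarrow>
     (\<exists>I L. OC_representation X lt I \<and> (\<forall>x\<in>X. ocint_length (I x) = L))"

definition contains_induced :: "'a set \<Rightarrow> ('a \<Rightarrow> 'a \<Rightarrow> bool) \<Rightarrow> 'b set \<Rightarrow> ('b \<Rightarrow> 'b \<Rightarrow> bool) \<Rightarrow> bool" where
  "contains_induced X ltP Y ltQ \<longleftrightarrow>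
     (\<exists>f. inj_on f Y \<and> f ` Y \<subseteq> X \<and> (\<forall>u\<in>Y. \<forall>v\<in>Y. ltQ u v \<longleftrightarrow> ltP (f u) (f v)))"

datatype pt = pa | pb | pc | pd | px | py

definition four_plus_one_set :: "pt set" where "four_plus_one_set = {pa, pb, pc, pd, px}"
definition four_plus_one :: "pt \<Rightarrow> pt \<Rightarrow> bool" where
  "four_plus_one u v \<longleftrightarrow> (u, v) \<in> {(pa,pb),(pa,pc),(pa,pd),(pb,pc),(pb,pd),(pc,pd)}"

definition three_one_one_set :: "pt set" where "three_one_one_set = {pa, pb, pc, px, py}"
definition three_one_one :: "pt \<Rightarrow> pt \<Rightarrow> bool" where
  "three_one_one u v \<longleftrightarrow> (u, v) \<in> {(pa,pb),(pa,pc),(pb,pc)}"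

definition Z_set :: "pt set" where "Z_set = {pa, pb, pc, pd, px, py}"
definition Z_rel :: "pt \<Rightarrow> pt \<Rightarrow> bool" where
  "Z_rel u v \<longleftrightarrow> (u, v) \<in> {(pa,pb),(pa,pc),(pa,pd),(pb,pc),(pb,pd),(pc,pd),(px,pd),(pa,py)}"

definition D_set :: "pt set" where "D_set = {pa, pb, pc, pd, px}"
definition D_rel :: "pt \<Rightarrow> pt \<Rightarrow> bool" where
  "D_rel u v \<longleftrightarrow> (u, v) \<in> {(pa,pb),(pa,pc),(pa,pd),(pb,pd),(pc,pd)}"

definition Y_set :: "pt set" where "Y_set = {pa, pb, pc, pd, px}"
definition Y_rel :: "pt \<Rightarrow> pt \<Rightarrow> bool" where
  "Y_rel u v \<longleftrightarrow> (u, v) \<in> {(pa,pd),(pa,pb),(pa,pc),(pd,pb),(pd,pc)}"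

definition Y_dual_rel :: "pt \<Rightarrow> pt \<Rightarrow> bool" where
  "Y_dual_rel u v \<longleftrightarrow> Y_rel v u"

end

theory Submission imports Defs begin

text \<open>In a twin-free poset distinct elements get distinct intervals, and this
  survives passing to an induced subposet. A unit interval is determined by its left
  endpoint l and whether it is closed, and one unit interval lies entirely before another
  exactly when l1 + L < l2, or l1 + L = l2 and not both are closed. Each of the six
  posets then admits no injective assignment of such endpoint data: the order relations
  and incomparabilities give an infeasible system of linear constraints on the l's.\<close>

definition ocint_left :: "ocint \<Rightarrow> real" where
  "ocint_left I = fst I"

definition ocint_closed :: "ocint \<Rightarrow> bool" where
  "ocint_closed I = snd (snd I)"

definition unit_precedes :: "real \<Rightarrow> real \<times> bool \<Rightarrow> real \<times> bool \<Rightarrow> bool" where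
  "unit_precedes L p q \<longleftrightarrow>
     fst p + L < fst q \<or> (fst p + L = fst q \<and> \<not> (snd p \<and> snd q))"

definition distinct_unit_OC_representable :: "'b set \<Rightarrow> ('b \<Rightarrow> 'b \<Rightarrow> bool) \<Rightarrow> bool" where
  "distinct_unit_OC_representable S R \<longleftrightarrow>
     (\<exists>J L. OC_representation S R J \<and> inj_on J S \<and> (\<forall>u\<in>S. ocint_length (J u) = L))"

definition unit_endpoint_model ::
    "real \<Rightarrow> 'b set \<Rightarrow> ('b \<Rightarrow> 'b \<Rightarrow> bool) \<Rightarrow> ('b \<Rightarrow> real) \<Rightarrow> ('b \<Rightarrow> bool) \<Rightarrow> bool" where
  "unit_endpoint_model L S R lo cl \<longleftrightarrow>
     (\<forall>u\<in>S. 0 \<le> L \<and> (cl u \<or> 0 < L)) \<and>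
     (\<forall>u\<in>S. \<forall>v\<in>S. u \<noteq> v \<longrightarrow> lo u \<noteq> lo v \<or> cl u \<noteq> cl v) \<and>
     (\<forall>u\<in>S. \<forall>v\<in>S. R u v \<longleftrightarrow> unit_precedes L (lo u, cl u) (lo v, cl v))"

lemma ocint_less_iff:
  assumes v1: "valid_ocint (l1, r1, c1)" and v2: "valid_ocint (l2, r2, c2)"
  shows "(\<forall>p\<in>ocint_set (l1, r1, c1). \<forall>q\<in>ocint_set (l2, r2, c2). p < q)
         \<longleftrightarrow> r1 < l2 \<or> (r1 = l2 \<and> \<not> (c1 \<and> c2))"
proof
  assume "r1 < l2 \<or> (r1 = l2 \<and> \<not> (c1 \<and> c2))"
  then show "\<forall>p\<in>ocint_set (l1, r1, c1). \<forall>q\<in>ocint_set (l2, r2, c2). p < q"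
    by (cases c1; cases c2; auto simp: ocint_set_def)
next
  assume less: "\<forall>p\<in>ocint_set (l1, r1, c1). \<forall>q\<in>ocint_set (l2, r2, c2). p < q"
  show "r1 < l2 \<or> (r1 = l2 \<and> \<not> (c1 \<and> c2))"
  proof (rule ccontr)
    assume overlap: "\<not> (r1 < l2 \<or> (r1 = l2 \<and> \<not> (c1 \<and> c2)))"
    define p where "p = (if c1 then r1 else (max l1 l2 + r1) / 2)"
    have p: "p \<in> ocint_set (l1, r1, c1)" "l2 \<le> p" "l2 < p \<or> (c1 \<and> c2 \<and> p = l2)"
      using v1 overlap by (auto simp: p_def ocint_set_def valid_ocint_def split: if_splits)
    define q where "q = (if c2 then l2 else (l2 + min r2 p) / 2)"
    have q: "q \<in> ocint_set (l2, r2, c2)" "q \<le> p"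
      using v2 p(2,3) by (auto simp: q_def ocint_set_def valid_ocint_def split: if_splits)
    show False
      using less p(1) q by force
  qed
qed

lemma ocint_eq_unit:
  assumes "ocint_length J = L"
  shows "J = (ocint_left J, ocint_left J + L, ocint_closed J)"
  using assms by (cases J) (simp add: ocint_length_def ocint_left_def ocint_closed_def)

lemma unit_OC_representation_less_iff:
  assumes rep: "OC_representation X lt I" and len: "\<forall>x\<in>X. ocint_length (I x) = L"
    and x: "x \<in> X" and y: "y \<in> X"
  shows "lt x y \<longleftrightarrow> unit_precedes L (ocint_left (I x), ocint_closed (I x))
                                      (ocint_left (I y), ocint_closed (I y))"
proof -
  define lx cx ly cy
    where "lx = ocint_left (I x)" and "cx = ocint_closed (I x)"
      and "ly = ocint_left (I y)" and "cy = ocint_closed (I y)"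
  have Ix: "I x = (lx, lx + L, cx)" and Iy: "I y = (ly, ly + L, cy)"
    using ocint_eq_unit len x y unfolding lx_def cx_def ly_def cy_def by blast+
  have "valid_ocint (lx, lx + L, cx)" "valid_ocint (ly, ly + L, cy)"
    using rep x y Ix Iy by (metis OC_representation_def)+
  moreover have "lt x y \<longleftrightarrow>
      (\<forall>p\<in>ocint_set (lx, lx + L, cx). \<forall>q\<in>ocint_set (ly, ly + L, cy). p < q)"
    using rep x y Ix Iy by (simp add: OC_representation_def)
  ultimately show ?thesis
    using ocint_less_iff by (simp add: unit_precedes_def lx_def cx_def ly_def cy_def)
qed

lemma twin_free_OC_representation_inj:
  assumes "OC_representation X lt I" and "twin_free X lt"
  shows "inj_on I X"
proof (rule inj_onI, rule ccontr)
  fix x y assume xy: "x \<in> X" "y \<in> X" "I x = I y" "x \<noteq> y"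
  then have "twins X lt x y"
    using assms(1) by (simp add: twins_def OC_representation_def)
  with assms(2) xy show False
    by (simp add: twin_free_def)
qed

lemma contains_induced_distinct_unit_OC_representable:
  assumes "twin_free X lt" and "unit_OC_interval_order X lt"
    and "contains_induced X lt S R"
  shows "distinct_unit_OC_representable S R"
proof -
  obtain I L where rep: "OC_representation X lt I" and len: "\<forall>x\<in>X. ocint_length (I x) = L"
    using assms(2) unfolding unit_OC_interval_order_def by blast
  obtain f where f: "inj_on f S" "f ` S \<subseteq> X" "\<forall>u\<in>S. \<forall>v\<in>S. R u v \<longleftrightarrow> lt (f u) (f v)"
    using assms(3) unfolding contains_induced_def by blast
  have "inj_on (I \<circ> f) S"
    using twin_free_OC_representation_inj[OF rep assms(1)] f(1,2)
    by (simp add: comp_inj_on inj_on_subset)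
  moreover have "OC_representation S R (I \<circ> f)"
    using rep f(2,3) unfolding OC_representation_def by (simp add: image_subset_iff)
  moreover have "\<forall>u\<in>S. ocint_length ((I \<circ> f) u) = L"
    using len f(2) by auto
  ultimately show ?thesis
    unfolding distinct_unit_OC_representable_def by blast
qed

lemma distinct_unit_OC_representable_endpoint_model:
  assumes "distinct_unit_OC_representable S R"
  shows "\<exists>L lo cl. unit_endpoint_model L S R lo cl"
proof -
  obtain J L where rep: "OC_representation S R J" and inj: "inj_on J S"
    and len: "\<forall>u\<in>S. ocint_length (J u) = L"
    using assms unfolding distinct_unit_OC_representable_def by blast
  define lo where "lo u = ocint_left (J u)" for u
  define cl where "cl u = ocint_closed (J u)" for u
  have shape: "J u = (lo u, lo u + L, cl u)" if "u \<in> S" for u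
    using ocint_eq_unit len that unfolding lo_def cl_def by blast
  have nonneg: "0 \<le> L \<and> (cl u \<or> 0 < L)" if "u \<in> S" for u
  proof -
    have "valid_ocint (lo u, lo u + L, cl u)"
      using rep that shape[OF that] by (metis OC_representation_def)
    then show ?thesis
      by (cases "cl u") (simp_all add: valid_ocint_def)
  qed
  have distinct: "lo u \<noteq> lo v \<or> cl u \<noteq> cl v" if "u \<in> S" "v \<in> S" "u \<noteq> v" for u v
  proof (rule ccontr)
    assume "\<not> (lo u \<noteq> lo v \<or> cl u \<noteq> cl v)"
    then have "J u = J v"
      using shape that(1,2) by simp
    with inj that show False
      by (simp add: inj_on_eq_iff)
  qed
  have precedes: "R u v \<longleftrightarrow> unit_precedes L (lo u, cl u) (lo v, cl v)"
    if "u \<in> S" "v \<in> S" for u v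
    using unit_OC_representation_less_iff[OF rep len that] by (simp add: lo_def cl_def)
  have "unit_endpoint_model L S R lo cl"
    unfolding unit_endpoint_model_def using nonneg distinct precedes by blast
  then show ?thesis
    by blast
qed

lemma contains_induced_unit_endpoint_model:
  assumes "twin_free X lt" and "unit_OC_interval_order X lt"
    and "contains_induced X lt S R"
  shows "\<exists>L lo cl. unit_endpoint_model L S R lo cl"
  using assms contains_induced_distinct_unit_OC_representable
    distinct_unit_OC_representable_endpoint_model by blast

lemma four_plus_one_no_unit_endpoint_model: "\<not> unit_endpoint_model L four_plus_one_set four_plus_one lo cl"
  unfolding unit_endpoint_model_def unit_precedes_def four_plus_one_set_def four_plus_one_def
  by simp (smt (verit))

lemma three_one_one_no_unit_endpoint_model: "\<not> unit_endpoint_model L three_one_one_set three_one_one lo cl"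
  unfolding unit_endpoint_model_def unit_precedes_def three_one_one_set_def three_one_one_def
  by simp (smt (verit))

lemma Z_no_unit_endpoint_model: "\<not> unit_endpoint_model L Z_set Z_rel lo cl"
  unfolding unit_endpoint_model_def unit_precedes_def Z_set_def Z_rel_def
  by simp (smt (verit))

lemma D_no_unit_endpoint_model: "\<not> unit_endpoint_model L D_set D_rel lo cl"
  unfolding unit_endpoint_model_def unit_precedes_def D_set_def D_rel_def
  by simp (smt (verit))

lemma Y_no_unit_endpoint_model: "\<not> unit_endpoint_model L Y_set Y_rel lo cl"
  unfolding unit_endpoint_model_def unit_precedes_def Y_set_def Y_rel_def
  by simp (smt (verit))

lemma Y_dual_no_unit_endpoint_model: "\<not> unit_endpoint_model L Y_set Y_dual_rel lo cl"
  unfolding unit_endpoint_model_def unit_precedes_def Y_set_def Y_dual_rel_def Y_rel_def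
  by simp (smt (verit))

theorem proposition5:
  fixes X :: "'a set" and lt :: "'a \<Rightarrow> 'a \<Rightarrow> bool"
  assumes "finite X"
    and "strict_poset X lt"
    and "twin_free X lt"
    and "unit_OC_interval_order X lt"
  shows "\<not> contains_induced X lt four_plus_one_set four_plus_one
       \<and> \<not> contains_induced X lt three_one_one_set three_one_one
       \<and> \<not> contains_induced X lt Z_set Z_rel
       \<and> \<not> contains_induced X lt D_set D_rel
       \<and> \<not> contains_induced X lt Y_set Y_rel
       \<and> \<not> contains_induced X lt Y_set Y_dual_rel"
  using contains_induced_unit_endpoint_model[OF assms(3,4)]
    four_plus_one_no_unit_endpoint_model three_one_one_no_unit_endpoint_model
    Z_no_unit_endpoint_model D_no_unit_endpoint_model
    Y_no_unit_endpoint_model Y_dual_no_unit_endpoint_model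
  by blast

end
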